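(* Let $a,b,k\in\mathbb{N}$ with $k\le\min(a,b)$. Then $\mathcal{D}_k([a]\times[b])\cong\mathcal{C}(a,k)\times\mathcal{C}(b,k)$ as posets.
   Context: $[n]=\{1,\dots,n\}$ and $\mathbb{Z}_+^2$ carries the product order. A Ferrers diagram is a finite order ideal of $\mathbb{Z}_+^2$. The Durfee length of a Ferrers diagram $D$ is the largest $k\in\mathbb{N}$ with $[k]\times[k]\subseteq D$. $\mathcal{D}_k([a]\times[b])$ is the set of Ferrers diagrams of Durfee length exactly $k$ contained in $[a]\times[b]$, ordered by inclusion. For $k\le n$, $\mathcal{C}(n,k)$ is the set of $k$-element subsets of $[n]$, each written as an increasing sequence $(x_1<\dots<x_k)$, with $\mathbf{x}\le\mathbf{y}$ iff $x_i\le y_i$ for all $i$; products of posets carry the product order. *)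

theory Defs
  imports Main
begin

definition ferrers :: "(nat \<times> nat) set \<Rightarrow> bool" where
  "ferrers D \<longleftrightarrow> finite D \<and> D \<subseteq> {1..} \<times> {1..} \<and>
     (\<forall>i j i' j'. (i, j) \<in> D \<longrightarrow> 1 \<le> i' \<longrightarrow> i' \<le> i \<longrightarrow> 1 \<le> j' \<longrightarrow> j' \<le> j \<longrightarrow> (i', j') \<in> D)"

definition durfee :: "(nat \<times> nat) set \<Rightarrow> nat" where
  "durfee D = (GREATEST k. {1..k} \<times> {1..k} \<subseteq> D)"

definition Dk :: "nat \<Rightarrow> nat \<Rightarrow> nat \<Rightarrow> (nat \<times> nat) set set" where
  "Dk a b k = {D. ferrers D \<and> D \<subseteq> {1..a} \<times> {1..b} \<and> durfee D = k}"

definition Cnk :: "nat \<Rightarrow> nat \<Rightarrow> nat list set" where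
  "Cnk n k = {xs. length xs = k \<and> sorted_wrt (<) xs \<and> set xs \<subseteq> {1..n}}"

definition leC :: "nat list \<Rightarrow> nat list \<Rightarrow> bool" where
  "leC xs ys \<longleftrightarrow> list_all2 (\<le>) xs ys"

definition le_prod :: "('a \<Rightarrow> 'a \<Rightarrow> bool) \<Rightarrow> ('b \<Rightarrow> 'b \<Rightarrow> bool) \<Rightarrow> 'a \<times> 'b \<Rightarrow> 'a \<times> 'b \<Rightarrow> bool" where
  "le_prod r s p q \<longleftrightarrow> r (fst p) (fst q) \<and> s (snd p) (snd q)"

definition poset_iso :: "'a set \<Rightarrow> ('a \<Rightarrow> 'a \<Rightarrow> bool) \<Rightarrow> 'b set \<Rightarrow> ('b \<Rightarrow> 'b \<Rightarrow> bool) \<Rightarrow> ('a \<Rightarrow> 'b) \<Rightarrow> bool" where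
  "poset_iso A leA B leB f \<longleftrightarrow> bij_betw f A B \<and> (\<forall>x\<in>A. \<forall>y\<in>A. leA x y \<longleftrightarrow> leB (f x) (f y))"

end

(*
  Cut a Ferrers diagram D of Durfee length k along its Durfee square. Since the cell
  (k+1, k+1) is missing, every cell of D lies in one of the first k columns or one of
  the first k rows. The heights c_1 >= ... >= c_k of the first k columns lie between k
  and a; shifting c_j down by j - 1 makes them strictly monotone, which yields a k-subset
  of [a], and inclusion of diagrams becomes the componentwise order. The first k rows are the first k columns of the transposed diagram and give
  the component in C(b,k).
*)

theory Submission
  imports Defs
begin

lemma poset_isoI:
  assumes "f ` A = B"
    and "\<And>x y. x \<in> A \<Longrightarrow> y \<in> A \<Longrightarrow> leA x y \<longleftrightarrow> leB (f x) (f y)"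
    and "\<And>x y. x \<in> A \<Longrightarrow> y \<in> A \<Longrightarrow> leA x y \<Longrightarrow> leA y x \<Longrightarrow> x = y"
    and "\<And>y. y \<in> B \<Longrightarrow> leB y y"
  shows "poset_iso A leA B leB f"
proof -
  have "inj_on f A"
  proof (rule inj_onI)
    fix x y assume "x \<in> A" "y \<in> A" "f x = f y"
    moreover have "leB (f x) (f x)"
      using assms(1,4) \<open>x \<in> A\<close> by blast
    ultimately show "x = y"
      using assms(2,3) by metis
  qed
  with assms(1,2) show ?thesis
    by (simp add: poset_iso_def bij_betw_def)
qed

lemma poset_iso_inv_into:
  assumes "poset_iso A leA B leB f"
  shows "poset_iso B leB A leA (inv_into A f)"
proof -
  have bij: "bij_betw f A B"
    using assms by (simp add: poset_iso_def)
  have "leB x y \<longleftrightarrow> leA (inv_into A f x) (inv_into A f y)" if "x \<in> B" "y \<in> B" for x y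
    using assms that bij_betw_inv_into_right[OF bij] bij_betw_apply[OF bij_betw_inv_into[OF bij]]
    unfolding poset_iso_def by metis
  with bij show ?thesis
    by (simp add: poset_iso_def bij_betw_inv_into)
qed

section \<open>Ferrers diagrams and Durfee length\<close>

lemma ferrersI:
  assumes "finite D" and "D \<subseteq> {1..} \<times> {1..}"
    and "\<And>i j i' j'. (i, j) \<in> D \<Longrightarrow> 1 \<le> i' \<Longrightarrow> i' \<le> i \<Longrightarrow> 1 \<le> j' \<Longrightarrow> j' \<le> j \<Longrightarrow> (i', j') \<in> D"
  shows "ferrers D"
  using assms unfolding ferrers_def by blast

context
  fixes D :: "(nat \<times> nat) set"
  assumes D: "ferrers D"
begin

lemma ferrers_finite: "finite D"
  using D by (simp add: ferrers_def)

lemma ferrers_pos: "(i, j) \<in> D \<Longrightarrow> 1 \<le> i \<and> 1 \<le> j"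
  using D unfolding ferrers_def by blast

lemma ferrers_down_closed:
  "(i, j) \<in> D \<Longrightarrow> 1 \<le> i' \<Longrightarrow> i' \<le> i \<Longrightarrow> 1 \<le> j' \<Longrightarrow> j' \<le> j \<Longrightarrow> (i', j') \<in> D"
  using D unfolding ferrers_def by blast

lemma ferrers_swap: "ferrers (prod.swap ` D)"
proof (rule ferrersI)
  show "finite (prod.swap ` D)"
    using ferrers_finite by simp
  show "prod.swap ` D \<subseteq> {1..} \<times> {1..}"
    using ferrers_pos by force
  fix i j i' j' assume "(i, j) \<in> prod.swap ` D" "1 \<le> i'" "i' \<le> i" "1 \<le> j'" "j' \<le> j"
  then have "(j', i') \<in> D"
    using ferrers_down_closed[of j i j' i'] by auto
  then show "(i', j') \<in> prod.swap ` D"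
    by force
qed

lemma ferrers_column:
  assumes "1 \<le> j"
  shows "(i, j) \<in> D \<longleftrightarrow> 1 \<le> i \<and> i \<le> card {i. (i, j) \<in> D}"
proof -
  let ?S = "{i. (i, j) \<in> D}"
  have "finite ((\<lambda>i. (i, j)) -` D)"
    using ferrers_finite by (rule finite_vimageI) (simp add: inj_on_def)
  then have fin: "finite ?S"
    by (simp add: vimage_def)
  have "?S = {1..card ?S}"
  proof (cases "?S = {}")
    case False
    have "(Max ?S, j) \<in> D"
      using Max_in[OF fin False] by simp
    have "?S = {1..Max ?S}"
    proof
      show "?S \<subseteq> {1..Max ?S}"
        using fin ferrers_pos by auto
      show "{1..Max ?S} \<subseteq> ?S"
        using ferrers_down_closed[OF \<open>(Max ?S, j) \<in> D\<close>] \<open>1 \<le> j\<close> by auto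
    qed
    then show ?thesis
      by (metis card_atLeastAtMost diff_Suc_1)
  qed simp
  then show ?thesis
    by (metis atLeastAtMost_iff mem_Collect_eq)
qed

lemma ferrers_hook:
  assumes "(Suc k, Suc k) \<notin> D" and "(i, j) \<in> D"
  shows "i \<le> k \<or> j \<le> k"
  using assms ferrers_down_closed[of i j "Suc k" "Suc k"] by fastforce

lemma durfee_square:
  shows "{1..durfee D} \<times> {1..durfee D} \<subseteq> D" and "(Suc (durfee D), Suc (durfee D)) \<notin> D"
proof -
  let ?P = "\<lambda>k. {1..k} \<times> {1..k} \<subseteq> D"
  have durfee: "durfee D = Greatest ?P"
    by (simp add: durfee_def)
  have bound: "\<forall>y. ?P y \<longrightarrow> y \<le> Max (fst ` D)"
  proof (intro allI impI)
    fix y assume "?P y"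
    show "y \<le> Max (fst ` D)"
    proof (cases "y = 0")
      case False
      with \<open>?P y\<close> have "y \<in> fst ` D"
        by force
      then show ?thesis
        using ferrers_finite by simp
    qed simp
  qed
  have "?P 0"
    by simp
  then show "?P (durfee D)"
    unfolding durfee by (rule GreatestI_nat) (use bound in blast)
  show "(Suc (durfee D), Suc (durfee D)) \<notin> D"
  proof
    assume "(Suc (durfee D), Suc (durfee D)) \<in> D"
    then have "?P (Suc (durfee D))"
      using ferrers_down_closed by auto
    then have "Suc (durfee D) \<le> Greatest ?P"
      by (rule Greatest_le_nat) (use bound in blast)
    then show False
      by (simp add: durfee)
  qed
qed

end

lemma ferrers_Un: "ferrers A \<Longrightarrow> ferrers B \<Longrightarrow> ferrers (A \<union> B)"
  unfolding ferrers_def by blast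

lemma durfee_eqI:
  assumes "{1..k} \<times> {1..k} \<subseteq> D" and "(Suc k, Suc k) \<notin> D"
  shows "durfee D = k"
  unfolding durfee_def
proof (rule Greatest_equality)
  fix y assume square: "{1..y} \<times> {1..y} \<subseteq> D"
  show "y \<le> k"
  proof (rule ccontr)
    assume "\<not> y \<le> k"
    then have "(Suc k, Suc k) \<in> {1..y} \<times> {1..y}"
      by auto
    with square assms(2) show False
      by blast
  qed
qed (fact assms(1))

section \<open>\<open>k\<close>-subsets as column heights\<close>

lemma sorted_wrt_less_nth_diff:
  fixes xs :: "nat list"
  assumes "sorted_wrt (<) xs" and "i \<le> j" and "j < length xs"
  shows "xs ! i + (j - i) \<le> xs ! j"
  using assms(2,3)
proof (induction j rule: dec_induct)
  case base
  then show ?case by simp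
next
  case (step n)
  then have "xs ! n < xs ! Suc n"
    using assms(1) sorted_wrt_nth_less by blast
  with step show ?case by simp
qed

lemma Cnk_le: "xs \<in> Cnk n k \<Longrightarrow> k \<le> n"
  using card_mono[of "{1..n}" "set xs"] distinct_card[of xs]
  by (auto simp: Cnk_def strict_sorted_iff)

text \<open>The subset \<open>x\<^sub>1 < \<dots> < x\<^sub>k\<close> codes the column heights
  \<open>c\<^sub>j = x\<^bsub>k+1-j\<^esub> + j - 1\<close> for \<open>1 \<le> j \<le> k\<close>: strict increase of the \<open>x\<^sub>i\<close> is weak
  decrease of the \<open>c\<^sub>j\<close>, and \<open>1 \<le> x\<^sub>1\<close>, \<open>x\<^sub>k \<le> n\<close> become \<open>k \<le> c\<^sub>k\<close>, \<open>c\<^sub>1 \<le> n\<close>.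
  Lists are indexed from 0, hence \<open>xs ! (k - j)\<close>.\<close>

definition col_height :: "nat \<Rightarrow> nat list \<Rightarrow> nat \<Rightarrow> nat" where
  "col_height k xs j = xs ! (k - j) + j - 1"

context
  fixes xs :: "nat list" and n k :: nat
  assumes xs: "xs \<in> Cnk n k"
begin

lemma col_height_ge: "1 \<le> j \<Longrightarrow> j \<le> k \<Longrightarrow> k \<le> col_height k xs j"
proof -
  assume j: "1 \<le> j" "j \<le> k"
  have "1 \<le> xs ! 0"
    using xs j by (auto simp: Cnk_def subset_iff)
  moreover have "xs ! 0 + (k - j - 0) \<le> xs ! (k - j)"
    using xs j by (intro sorted_wrt_less_nth_diff) (auto simp: Cnk_def)
  ultimately show ?thesis
    using j by (simp add: col_height_def)
qed

lemma col_height_le: "1 \<le> j \<Longrightarrow> j \<le> k \<Longrightarrow> col_height k xs j \<le> n"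
proof -
  assume j: "1 \<le> j" "j \<le> k"
  have "xs ! (k - 1) \<le> n"
    using xs j by (auto simp: Cnk_def subset_iff)
  moreover have "xs ! (k - j) + (k - 1 - (k - j)) \<le> xs ! (k - 1)"
    using xs j by (intro sorted_wrt_less_nth_diff) (auto simp: Cnk_def)
  ultimately show ?thesis
    using j by (simp add: col_height_def)
qed

lemma col_height_antimono:
  "1 \<le> j \<Longrightarrow> j \<le> j' \<Longrightarrow> j' \<le> k \<Longrightarrow> col_height k xs j' \<le> col_height k xs j"
proof -
  assume j: "1 \<le> j" "j \<le> j'" "j' \<le> k"
  have "xs ! (k - j') + (k - j - (k - j')) \<le> xs ! (k - j)"
    using xs j by (intro sorted_wrt_less_nth_diff) (auto simp: Cnk_def)
  then show ?thesis
    using j by (simp add: col_height_def)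
qed

end

lemma leC_antisym: "leC xs ys \<Longrightarrow> leC ys xs \<Longrightarrow> xs = ys"
  unfolding leC_def by (rule list_all2_antisym) auto

lemma leC_iff_col_height_le:
  assumes "xs \<in> Cnk n k" and "xs' \<in> Cnk n k"
  shows "leC xs xs' \<longleftrightarrow> (\<forall>j\<in>{1..k}. col_height k xs j \<le> col_height k xs' j)"
proof -
  have "leC xs xs' \<longleftrightarrow> (\<forall>m<k. xs ! m \<le> xs' ! m)"
    using assms by (simp add: leC_def list_all2_conv_all_nth Cnk_def)
  also have "\<dots> \<longleftrightarrow> (\<forall>j\<in>{1..k}. xs ! (k - j) \<le> xs' ! (k - j))"
  proof
    assume "\<forall>m<k. xs ! m \<le> xs' ! m"
    then show "\<forall>j\<in>{1..k}. xs ! (k - j) \<le> xs' ! (k - j)"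
      by auto
  next
    assume le: "\<forall>j\<in>{1..k}. xs ! (k - j) \<le> xs' ! (k - j)"
    show "\<forall>m<k. xs ! m \<le> xs' ! m"
    proof (intro allI impI)
      fix m assume "m < k"
      then show "xs ! m \<le> xs' ! m"
        using le[rule_format, of "k - m"] by simp
    qed
  qed
  also have "\<dots> \<longleftrightarrow> (\<forall>j\<in>{1..k}. col_height k xs j \<le> col_height k xs' j)"
    by (rule ball_cong) (auto simp: col_height_def)
  finally show ?thesis .
qed

lemma Cnk_of_col_heights:
  fixes c :: "nat \<Rightarrow> nat"
  assumes ge: "\<And>j. 1 \<le> j \<Longrightarrow> j \<le> k \<Longrightarrow> k \<le> c j"
    and le: "\<And>j. 1 \<le> j \<Longrightarrow> j \<le> k \<Longrightarrow> c j \<le> n"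
    and antimono: "\<And>j j'. 1 \<le> j \<Longrightarrow> j \<le> j' \<Longrightarrow> j' \<le> k \<Longrightarrow> c j' \<le> c j"
  shows "\<exists>xs\<in>Cnk n k. \<forall>j\<in>{1..k}. col_height k xs j = c j"
proof
  define xs where "xs = map (\<lambda>m. c (k - m) + 1 - (k - m)) [0..<k]"
  have "sorted_wrt (<) xs"
    unfolding sorted_wrt_iff_nth_less
  proof (intro allI impI)
    fix i j assume "i < j" "j < length xs"
    moreover have "c (k - i) \<le> c (k - j)" "k \<le> c (k - i)"
      using antimono[of "k - j" "k - i"] ge[of "k - i"] calculation by (auto simp: xs_def)
    ultimately show "xs ! i < xs ! j"
      by (simp add: xs_def)
  qed
  moreover have "set xs \<subseteq> {1..n}"
  proof
    fix x assume "x \<in> set xs"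
    then obtain m where "m < k" "x = c (k - m) + 1 - (k - m)"
      by (auto simp: xs_def)
    moreover have "k \<le> c (k - m)" "c (k - m) \<le> n"
      using ge[of "k - m"] le[of "k - m"] calculation by auto
    ultimately show "x \<in> {1..n}"
      by auto
  qed
  ultimately show "xs \<in> Cnk n k"
    by (simp add: Cnk_def xs_def)
  show "\<forall>j\<in>{1..k}. col_height k xs j = c j"
  proof
    fix j assume "j \<in> {1..k}"
    moreover from this have "j \<le> c j"
      using ge[of j] by auto
    ultimately show "col_height k xs j = c j"
      by (simp add: col_height_def xs_def)
  qed
qed

section \<open>The diagram of a pair of \<open>k\<close>-subsets\<close>

definition col_block :: "nat \<Rightarrow> nat list \<Rightarrow> (nat \<times> nat) set" where
  "col_block k xs = {(i, j). 1 \<le> i \<and> 1 \<le> j \<and> j \<le> k \<and> i \<le> col_height k xs j}"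

context
  fixes xs :: "nat list" and n k :: nat
  assumes xs: "xs \<in> Cnk n k"
begin

lemma col_block_subset: "col_block k xs \<subseteq> {1..n} \<times> {1..k}"
  using col_height_le[OF xs] by (fastforce simp: col_block_def)

lemma square_subset_col_block: "{1..k} \<times> {1..k} \<subseteq> col_block k xs"
  using col_height_ge[OF xs] by (fastforce simp: col_block_def)

lemma ferrers_col_block: "ferrers (col_block k xs)"
proof (rule ferrersI)
  show "finite (col_block k xs)"
    using col_block_subset finite_subset by blast
  show "col_block k xs \<subseteq> {1..} \<times> {1..}"
    by (auto simp: col_block_def)
  fix i j i' j'
  assume "(i, j) \<in> col_block k xs" "1 \<le> i'" "i' \<le> i" "1 \<le> j'" "j' \<le> j"
  moreover from this have "col_height k xs j \<le> col_height k xs j'"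
    by (intro col_height_antimono[OF xs]) (auto simp: col_block_def)
  ultimately show "(i', j') \<in> col_block k xs"
    by (auto simp: col_block_def)
qed

end

lemma col_block_subset_iff:
  assumes xs: "xs \<in> Cnk n k" and xs': "xs' \<in> Cnk n k"
  shows "col_block k xs \<subseteq> col_block k xs' \<longleftrightarrow> leC xs xs'"
proof -
  have "col_block k xs \<subseteq> col_block k xs' \<longleftrightarrow>
      (\<forall>j\<in>{1..k}. col_height k xs j \<le> col_height k xs' j)"
  proof
    assume sub: "col_block k xs \<subseteq> col_block k xs'"
    show "\<forall>j\<in>{1..k}. col_height k xs j \<le> col_height k xs' j"
    proof
      fix j assume j: "j \<in> {1..k}"
      then have "(col_height k xs j, j) \<in> col_block k xs"
        using col_height_ge[OF xs, of j] by (auto simp: col_block_def)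
      with sub show "col_height k xs j \<le> col_height k xs' j"
        by (auto simp: col_block_def)
    qed
  next
    assume "\<forall>j\<in>{1..k}. col_height k xs j \<le> col_height k xs' j"
    then show "col_block k xs \<subseteq> col_block k xs'"
      by (auto simp: col_block_def intro: order.trans)
  qed
  then show ?thesis
    using leC_iff_col_height_le[OF xs xs'] by simp
qed

lemma col_block_of_ferrers:
  assumes D: "ferrers D" and sub: "D \<subseteq> {1..n} \<times> UNIV" and sq: "{1..k} \<times> {1..k} \<subseteq> D"
  shows "\<exists>xs\<in>Cnk n k. col_block k xs = {p \<in> D. snd p \<le> k}"
proof -
  define c where "c j = card {i. (i, j) \<in> D}" for j
  have col: "(i, j) \<in> D \<longleftrightarrow> 1 \<le> i \<and> i \<le> c j" if "1 \<le> j" for i j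
    unfolding c_def using ferrers_column[OF D that] .
  have column_sub: "{i. (i, j) \<in> D} \<subseteq> {1..n}" for j
    using sub by auto
  then have fin: "finite {i. (i, j) \<in> D}" for j
    by (rule finite_subset) simp
  have "\<exists>xs\<in>Cnk n k. \<forall>j\<in>{1..k}. col_height k xs j = c j"
  proof (rule Cnk_of_col_heights)
    fix j assume j: "1 \<le> j" "j \<le> k"
    have "{1..k} \<subseteq> {i. (i, j) \<in> D}"
      using sq j by auto
    from card_mono[OF fin this] show "k \<le> c j"
      unfolding c_def by simp
    show "c j \<le> n"
      unfolding c_def using card_mono[OF _ column_sub] by simp
  next
    fix j j' assume j: "1 \<le> j" "j \<le> j'" "j' \<le> k"
    have "{i. (i, j') \<in> D} \<subseteq> {i. (i, j) \<in> D}"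
      using ferrers_pos[OF D] ferrers_down_closed[OF D] j by blast
    then show "c j' \<le> c j"
      unfolding c_def using card_mono[OF fin] by blast
  qed
  then obtain xs where xs: "xs \<in> Cnk n k" and heights: "\<forall>j\<in>{1..k}. col_height k xs j = c j" ..
  have "(i, j) \<in> col_block k xs \<longleftrightarrow> (i, j) \<in> D \<and> j \<le> k" for i j
  proof (cases "1 \<le> j \<and> j \<le> k")
    case True
    then have "col_height k xs j = c j"
      using heights by simp
    with True show ?thesis
      using col[of j i] by (simp add: col_block_def)
  next
    case False
    then show ?thesis
      using ferrers_pos[OF D, of i j] by (auto simp: col_block_def)
  qed
  then have "col_block k xs = {p \<in> D. snd p \<le> k}"
    by auto
  with xs show ?thesis ..
qed

definition diagram :: "nat \<Rightarrow> nat list \<Rightarrow> nat list \<Rightarrow> (nat \<times> nat) set" where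
  "diagram k xs ys = col_block k xs \<union> prod.swap ` col_block k ys"

lemma swap_diagram: "prod.swap ` diagram k xs ys = diagram k ys xs"
  by (auto simp: diagram_def image_Un image_image)

lemma diagram_restrict_cols:
  assumes "xs \<in> Cnk n k"
  shows "{p \<in> diagram k xs ys. snd p \<le> k} = col_block k xs"
  by (auto simp: diagram_def col_block_def intro: le_trans[OF _ col_height_ge[OF assms]])

lemma diagram_in_Dk:
  assumes xs: "xs \<in> Cnk a k" and ys: "ys \<in> Cnk b k"
  shows "diagram k xs ys \<in> Dk a b k"
proof -
  have "ferrers (diagram k xs ys)"
    unfolding diagram_def
    by (intro ferrers_Un ferrers_swap ferrers_col_block[OF xs] ferrers_col_block[OF ys])
  moreover have "diagram k xs ys \<subseteq> {1..a} \<times> {1..b}"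
    using col_block_subset[OF xs] col_block_subset[OF ys] Cnk_le[OF xs] Cnk_le[OF ys]
    by (fastforce simp: diagram_def)
  moreover have "durfee (diagram k xs ys) = k"
    using square_subset_col_block[OF xs] by (intro durfee_eqI) (auto simp: diagram_def col_block_def)
  ultimately show ?thesis
    by (simp add: Dk_def)
qed

lemma diagram_subset_iff:
  assumes "xs \<in> Cnk a k" "xs' \<in> Cnk a k" "ys \<in> Cnk b k" "ys' \<in> Cnk b k"
  shows "diagram k xs ys \<subseteq> diagram k xs' ys' \<longleftrightarrow> leC xs xs' \<and> leC ys ys'"
proof
  assume sub: "diagram k xs ys \<subseteq> diagram k xs' ys'"
  then have "{p \<in> diagram k xs ys. snd p \<le> k} \<subseteq> {p \<in> diagram k xs' ys'. snd p \<le> k}"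
    by blast
  then have "leC xs xs'"
    using assms by (simp add: diagram_restrict_cols col_block_subset_iff)
  from sub have "prod.swap ` diagram k xs ys \<subseteq> prod.swap ` diagram k xs' ys'"
    by (rule image_mono)
  then have "{p \<in> diagram k ys xs. snd p \<le> k} \<subseteq> {p \<in> diagram k ys' xs'. snd p \<le> k}"
    unfolding swap_diagram by blast
  then have "leC ys ys'"
    using assms by (simp add: diagram_restrict_cols col_block_subset_iff)
  with \<open>leC xs xs'\<close> show "leC xs xs' \<and> leC ys ys'" ..
next
  assume "leC xs xs' \<and> leC ys ys'"
  then show "diagram k xs ys \<subseteq> diagram k xs' ys'"
    using assms by (auto simp: diagram_def col_block_subset_iff[symmetric])
qed

lemma Dk_eq_diagram:
  assumes "D \<in> Dk a b k"
  shows "\<exists>xs\<in>Cnk a k. \<exists>ys\<in>Cnk b k. D = diagram k xs ys"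
proof -
  have D: "ferrers D" and sub: "D \<subseteq> {1..a} \<times> {1..b}" and k: "durfee D = k"
    using assms by (auto simp: Dk_def)
  note sq = durfee_square[OF D, unfolded k]
  have "D \<subseteq> {1..a} \<times> UNIV"
    using sub by auto
  from col_block_of_ferrers[OF D this sq(1)]
  obtain xs where xs: "xs \<in> Cnk a k" and cols: "col_block k xs = {p \<in> D. snd p \<le> k}" ..
  have "prod.swap ` D \<subseteq> {1..b} \<times> UNIV" and "{1..k} \<times> {1..k} \<subseteq> prod.swap ` D"
    using sub sq(1) by auto
  from col_block_of_ferrers[OF ferrers_swap[OF D] this]
  obtain ys where ys: "ys \<in> Cnk b k"
    and rows: "col_block k ys = {p \<in> prod.swap ` D. snd p \<le> k}" ..
  have "D = {p \<in> D. snd p \<le> k} \<union> prod.swap ` {p \<in> prod.swap ` D. snd p \<le> k}"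
    by (auto simp: image_image dest: ferrers_hook[OF D sq(2)])
  then have "D = diagram k xs ys"
    unfolding diagram_def cols rows .
  with xs ys show ?thesis
    by blast
qed

lemma image_diagram_eq_Dk:
  "(\<lambda>p. diagram k (fst p) (snd p)) ` (Cnk a k \<times> Cnk b k) = Dk a b k"
proof
  show "(\<lambda>p. diagram k (fst p) (snd p)) ` (Cnk a k \<times> Cnk b k) \<subseteq> Dk a b k"
    using diagram_in_Dk by auto
  show "Dk a b k \<subseteq> (\<lambda>p. diagram k (fst p) (snd p)) ` (Cnk a k \<times> Cnk b k)"
  proof
    fix D assume "D \<in> Dk a b k"
    then obtain xs ys where "xs \<in> Cnk a k" "ys \<in> Cnk b k" "D = diagram k xs ys"
      using Dk_eq_diagram by blast
    then show "D \<in> (\<lambda>p. diagram k (fst p) (snd p)) ` (Cnk a k \<times> Cnk b k)"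
      by force
  qed
qed

theorem proposition1p12:
  fixes a b k :: nat
  assumes "k \<le> min a b"
  shows "\<exists>f. poset_iso (Dk a b k) (\<subseteq>) (Cnk a k \<times> Cnk b k) (le_prod leC leC) f"
proof -
  let ?diagram = "\<lambda>p. diagram k (fst p) (snd p)"
  have "poset_iso (Cnk a k \<times> Cnk b k) (le_prod leC leC) (Dk a b k) (\<subseteq>) ?diagram"
  proof (rule poset_isoI)
    show "?diagram ` (Cnk a k \<times> Cnk b k) = Dk a b k"
      by (rule image_diagram_eq_Dk)
    show "le_prod leC leC p q \<longleftrightarrow> ?diagram p \<subseteq> ?diagram q"
      if "p \<in> Cnk a k \<times> Cnk b k" "q \<in> Cnk a k \<times> Cnk b k" for p q
      using that diagram_subset_iff[of "fst p" a k "fst q" "snd p" b "snd q"]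
      by (simp add: le_prod_def mem_Times_iff)
    show "p = q" if "le_prod leC leC p q" "le_prod leC leC q p" for p q
      using that leC_antisym by (simp add: le_prod_def prod_eq_iff)
  qed simp
  then show ?thesis
    by (blast intro: poset_iso_inv_into)
qed

end
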